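(* Let $A\subset\mathbb R^{n+1}_+$ be measurable with $M(A)<\infty$, and assume there exist $\delta,\delta'\in(0,1/10)$ such that $|B_\rho(\mathbf z,\delta)\cap A|\ge\delta'|B_\rho(\mathbf z,\delta)|$ for every $\mathbf z\in A$. Then $M(A_R)<\infty$ for every $R\in(0,\infty)$.
   Context: $\mathbb R^{n+1}_+=\mathbb R^n\times(0,\infty)$; $|\cdot|$ is Lebesgue measure. $\mathcal D$: dyadic cubes $2^{-j}(k+[0,1)^n)$, $j\in\mathbb Z_+$, $k\in\mathbb Z^n$, with side length $\ell(I)$. $M(A):=\sup_{I\in\mathcal D}\frac1{|I|}\int_I\int_0^{\ell(I)}\mathbf 1_A(x,y)\frac{dy}ydx$. Hyperbolic metric $\rho(\mathbf x,\mathbf y)=\operatorname{arccosh}(1+\frac{|\mathbf x-\mathbf y|^2}{2x_{n+1}y_{n+1}})$, $B_\rho(\mathbf z,t)=\{\mathbf y:\rho(\mathbf z,\mathbf y)<t\}$, $A_R=\{\mathbf x:\inf_{\mathbf y\in A}\rho(\mathbf x,\mathbf y)<R\}$. *)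

theory Defs
  imports "HOL-Analysis.Analysis"
begin

definition upper_half :: "((real^'n) \<times> real) set" where
  "upper_half = {p. snd p > 0}"

definition dyadic_cube :: "nat \<Rightarrow> ('n::finite \<Rightarrow> int) \<Rightarrow> (real^'n) set" where
  "dyadic_cube j k = {x. \<forall>i. real_of_int (k i) / 2^j \<le> x $ i \<and> x $ i < (real_of_int (k i) + 1) / 2^j}"

text \<open>M(A) = sup over dyadic cubes I of (1/|I|) \<integral>_I \<integral>_0^{l(I)} 1_A(x,y) dy/y dx,
  where l(I) = 2^-j and |I| = 2^(-j n).\<close>
definition Mcar :: "((real^'n::finite) \<times> real) set \<Rightarrow> ennreal" where
  "Mcar A = (SUP jk \<in> (UNIV :: (nat \<times> ('n \<Rightarrow> int)) set).
     ennreal (2 ^ (CARD('n) * fst jk)) *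
     (\<integral>\<^sup>+ p. indicator (A \<inter> (dyadic_cube (fst jk) (snd jk) \<times> {0<..<1 / 2 ^ fst jk})) p
        / ennreal (snd p) \<partial>lebesgue))"

definition hrho :: "((real^'n) \<times> real) \<Rightarrow> ((real^'n) \<times> real) \<Rightarrow> real" where
  "hrho p q = arcosh (1 + (dist p q)\<^sup>2 / (2 * snd p * snd q))"

definition hball :: "((real^'n) \<times> real) \<Rightarrow> real \<Rightarrow> ((real^'n) \<times> real) set" where
  "hball z t = {q \<in> upper_half. hrho z q < t}"

text \<open>A_R = {x in the upper half space : inf_{y in A} rho(x,y) < R}, written as an existential.\<close>
definition hnbhd :: "((real^'n) \<times> real) set \<Rightarrow> real \<Rightarrow> ((real^'n) \<times> real) set" where
  "hnbhd A R = {p \<in> upper_half. \<exists>q\<in>A. hrho p q < R}"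

end

theory Submission
  imports Defs
begin

text \<open>
  A point p of A_R lies within hyperbolic distance R of some q in A, and the hyperbolic
  ball of radius \<delta> around q is contained in the region of points w with |p - w| < K y_p and
  y_w > y_p / K, for a constant K depending only on R and \<delta>. The density hypothesis
  therefore puts a portion of A of measure at least c y_p^(n+1) into this region, so that
  1 / y_p is bounded by C y_p^(-n-2) times that measure. Integrating over a Carleson box and
  exchanging the order of integration, the integral over the box of p is at most C / y_w, and
  only points w of the box dilated by the factor K contribute. Below height l(I) the dilated
  box is covered by (2K+1)^n Carleson boxes of the same generation, and above it
  dy/y is bounded by 1 / l(I) on a ball of radius comparable to l(I). Hence
  M(A_R) <= C ((2K+1)^n M(A) + C').
\<close>

section \<open>Hyperbolic balls\<close>

lemma hrho_commute: "hrho p q = hrho q p"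
  unfolding hrho_def by (simp add: dist_commute mult_ac)

lemma hrho_less_iff:
  assumes yp: "0 < snd p" and yq: "0 < snd q" and t: "0 \<le> t"
  shows "hrho p q < t \<longleftrightarrow> (dist p q)\<^sup>2 < 2 * (cosh t - 1) * snd p * snd q"
proof -
  define x where "x = 1 + (dist p q)\<^sup>2 / (2 * snd p * snd q)"
  have pos: "0 < 2 * snd p * snd q" using yp yq by simp
  have "hrho p q < t \<longleftrightarrow> arcosh x < arcosh (cosh t)"
    by (simp add: hrho_def x_def arcosh_cosh_real[OF t])
  also have "\<dots> \<longleftrightarrow> x < cosh t"
    using pos by (intro arcosh_less_iff_real) (simp_all add: x_def cosh_real_ge_1)
  also have "\<dots> \<longleftrightarrow> (dist p q)\<^sup>2 / (2 * snd p * snd q) < cosh t - 1"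
    unfolding x_def by linarith
  also have "\<dots> \<longleftrightarrow> (dist p q)\<^sup>2 < 2 * (cosh t - 1) * snd p * snd q"
    using pos by (simp add: divide_less_eq mult_ac)
  finally show ?thesis .
qed

lemma hrho_less_imp_bounds:
  assumes yp: "0 < snd p" and yq: "0 < snd q" and pq: "hrho p q < R"
  shows "dist p q < 2 * cosh R * snd p" and "snd q < 2 * cosh R * snd p"
proof -
  define b where "b = 2 * cosh R"
  have b: "2 \<le> b" using cosh_real_ge_1[of R] by (simp add: b_def)
  have "0 \<le> hrho p q"
    unfolding hrho_def using yp yq by (intro arcosh_nonneg_real) simp
  then have d2: "(dist p q)\<^sup>2 < (b - 2) * snd p * snd q"
    using hrho_less_iff[OF yp yq, of R] pq by (simp add: b_def algebra_simps)
  have "\<bar>snd p - snd q\<bar> \<le> dist p q" using dist_snd_le[of p q] by (simp add: dist_real_def)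
  then have "(snd p - snd q)\<^sup>2 \<le> (dist p q)\<^sup>2" by (metis abs_ge_zero power2_abs power_mono)
  moreover have "(snd p - snd q)\<^sup>2 = (snd p)\<^sup>2 + snd q * snd q - 2 * snd p * snd q"
    by (simp add: power2_eq_square algebra_simps)
  moreover have "(b - 2) * snd p * snd q = b * snd p * snd q - 2 * snd p * snd q"
    by (simp add: algebra_simps)
  moreover have "0 \<le> (snd p)\<^sup>2" by simp
  ultimately have "snd q * snd q < b * snd p * snd q" using d2 by linarith
  then have q: "snd q < b * snd p" using yq by simp
  have "(dist p q)\<^sup>2 < (b - 2) * snd p * snd q" by (fact d2)
  also have "\<dots> \<le> (b - 2) * snd p * (b * snd p)"
    using b yp q by (intro mult_left_mono) auto
  also have "\<dots> \<le> b * snd p * (b * snd p)"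
    using b yp by (intro mult_right_mono) auto
  finally have "(dist p q)\<^sup>2 < (b * snd p)\<^sup>2" by (simp add: power2_eq_square)
  then have "dist p q < b * snd p"
    by (rule power2_less_imp_less) (use b yp in simp)
  with q show "dist p q < 2 * cosh R * snd p" and "snd q < 2 * cosh R * snd p"
    by (simp_all add: b_def)
qed

lemma cosh_gt_1: "0 < t \<Longrightarrow> 1 < cosh (t::real)"
  using cosh_real_nonneg_less_iff[of 0 t] by simp

lemma ball_subset_hball:
  assumes d: "0 < \<delta>" and yq: "0 < snd q"
  shows "ball q (min (1/2) (cosh \<delta> - 1) * snd q) \<subseteq> hball q \<delta>"
proof
  define r where "r = min (1/2) (cosh \<delta> - 1)"
  have r: "0 < r" "r \<le> 1/2" "r \<le> cosh \<delta> - 1"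
    using cosh_gt_1[OF d] by (simp_all add: r_def min_def)
  fix w assume "w \<in> ball q (min (1/2) (cosh \<delta> - 1) * snd q)"
  then have dw: "dist q w < r * snd q" by (simp add: r_def)
  have "\<bar>snd q - snd w\<bar> \<le> dist q w" using dist_snd_le[of q w] by (simp add: dist_real_def)
  moreover have "r * snd q \<le> snd q / 2" using r yq by simp
  ultimately have yw: "snd q < 2 * snd w" using dw by linarith
  then have yw0: "0 < snd w" using yq by simp
  have "(dist q w)\<^sup>2 \<le> (r * snd q)\<^sup>2"
    using dw by (simp add: power_mono)
  also have "\<dots> = r * r * (snd q * snd q)" by (simp add: power2_eq_square)
  also have "\<dots> \<le> (cosh \<delta> - 1) * (snd q * snd q)"
    using r by (intro mult_right_mono) (simp_all add: mult_le_one order_trans[OF _ r(3)])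
  also have "\<dots> < (cosh \<delta> - 1) * (2 * snd q * snd w)"
    using cosh_gt_1[OF d] yq yw by (intro mult_strict_left_mono) auto
  finally have "hrho q w < \<delta>"
    using hrho_less_iff[OF yq yw0, of \<delta>] d by (simp add: mult_ac)
  then show "w \<in> hball q \<delta>"
    using yw0 by (simp add: hball_def upper_half_def)
qed

lemma open_hball:
  assumes "0 < snd q" "0 \<le> t"
  shows "open (hball q t)"
proof -
  have "hball q t = {w. 0 < snd w} \<inter> {w. (dist q w)\<^sup>2 < 2 * (cosh t - 1) * snd q * snd w}"
    using hrho_less_iff[of q _ t] assms by (auto simp: hball_def upper_half_def)
  also have "open \<dots>"
    by (intro open_Int open_Collect_less continuous_intros)
  finally show ?thesis .
qed

lemma emeasure_hball_ge:
  fixes q :: "(real^'n::finite) \<times> real"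
  assumes d: "0 < \<delta>" and yq: "0 < snd q" and s: "0 \<le> s" "s \<le> snd q"
  shows "ennreal (unit_ball_vol (CARD('n) + 1) * (min (1/2) (cosh \<delta> - 1) * s) ^ (CARD('n) + 1))
    \<le> emeasure lebesgue (hball q \<delta>)"
proof -
  define r where "r = min (1/2) (cosh \<delta> - 1) * s"
  have r: "0 \<le> r" "r \<le> min (1/2) (cosh \<delta> - 1) * snd q"
    using cosh_real_ge_1[of \<delta>] s by (simp_all add: r_def mult_left_mono)
  then have "ennreal (unit_ball_vol (CARD('n) + 1) * r ^ (CARD('n) + 1)) = emeasure lborel (ball q r)"
    by (simp add: emeasure_ball)
  also have "\<dots> \<le> emeasure lborel (hball q \<delta>)"
    using order_trans[OF subset_ball[OF r(2)] ball_subset_hball[OF d yq]] open_hball[OF yq] d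
    by (intro emeasure_mono) auto
  also have "\<dots> = emeasure lebesgue (hball q \<delta>)"
    using open_hball[OF yq] d by simp
  finally show ?thesis by (simp add: r_def)
qed

section \<open>Regions of comparable height\<close>

definition comparable_region :: "('a::metric_space \<times> real) \<Rightarrow> real \<Rightarrow> ('a \<times> real) set" where
  "comparable_region p K = {w. dist p w < K * snd p \<and> snd p < K * snd w}"

lemma open_comparable_region: "open (comparable_region p K)"
  unfolding comparable_region_def Collect_conj_eq
  by (intro open_Int open_Collect_less continuous_intros)

lemma sets_lebesgue_comparable_region [measurable]:
  "comparable_region (p :: 'a::euclidean_space \<times> real) K \<in> sets lebesgue"
  using borel_open[OF open_comparable_region[of p K]] by simp

lemma hball_subset_comparable_region:
  assumes yp: "0 < snd p" and yq: "0 < snd q" and pq: "hrho p q < R"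
    and K: "2 * cosh R * (1 + 2 * cosh \<delta>) \<le> K"
  shows "hball q \<delta> \<subseteq> comparable_region p K"
proof
  fix w assume "w \<in> hball q \<delta>"
  then have yw: "0 < snd w" and qw: "hrho q w < \<delta>" by (auto simp: hball_def upper_half_def)
  define a b where "a = 2 * cosh R" and "b = 2 * cosh \<delta>"
  have a: "2 \<le> a" and b: "2 \<le> b"
    using cosh_real_ge_1[of R] cosh_real_ge_1[of \<delta>] by (simp_all add: a_def b_def)
  have dpq: "dist p q < a * snd p"
    using hrho_less_imp_bounds(1)[OF yp yq pq] by (simp add: a_def)
  have ypq: "snd p < a * snd q"
    using hrho_less_imp_bounds(2)[OF yq yp] pq by (simp add: a_def hrho_commute)
  have dqw: "dist q w < b * snd q"
    using hrho_less_imp_bounds(1)[OF yq yw qw] by (simp add: b_def)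
  have yqw: "snd q < b * snd w"
    using hrho_less_imp_bounds(2)[OF yw yq] qw by (simp add: b_def hrho_commute)
  have yqp: "snd q < a * snd p"
    using hrho_less_imp_bounds(2)[OF yp yq pq] by (simp add: a_def)
  have "dist p w < a * snd p + b * snd q"
    using dist_triangle[of p w q] dpq dqw by linarith
  also have "\<dots> \<le> a * snd p + b * (a * snd p)"
    using yqp b by (intro add_left_mono mult_left_mono) auto
  also have "\<dots> = a * (1 + b) * snd p" by (simp add: algebra_simps)
  also have "\<dots> \<le> K * snd p"
    using K yp by (intro mult_right_mono) (auto simp: a_def b_def)
  finally have dist_pw: "dist p w < K * snd p" .
  have "a * snd q < a * (b * snd w)" using yqw a by simp
  then have "snd p < a * b * snd w" using ypq by (simp add: mult.assoc)
  also have "\<dots> \<le> K * snd w"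
  proof (rule mult_right_mono)
    have "a * b \<le> a * (1 + b)" using a by simp
    then show "a * b \<le> K" using K unfolding a_def b_def by linarith
  qed (use yw in simp)
  finally show "w \<in> comparable_region p K" using dist_pw by (simp add: comparable_region_def)
qed

lemma comparable_regionD:
  assumes w: "w \<in> comparable_region p K" and yp: "0 < snd p"
  shows "p \<in> ball w (K\<^sup>2 * snd w)" and "snd w < (1 + K) * snd p"
proof -
  from w have d: "dist p w < K * snd p" and y: "snd p < K * snd w"
    by (auto simp: comparable_region_def)
  have "0 < K * snd p" using d zero_le_dist[of p w] by linarith
  then have K: "0 < K" using yp by (simp add: zero_less_mult_iff)
  have "K * snd p < K * (K * snd w)" using y K by simp
  with d show "p \<in> ball w (K\<^sup>2 * snd w)" by (simp add: dist_commute power2_eq_square mult.assoc)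
  have "\<bar>snd w - snd p\<bar> \<le> dist p w" using dist_snd_le[of w p] by (simp add: dist_real_def dist_commute)
  with d show "snd w < (1 + K) * snd p" by (simp add: algebra_simps)
qed

lemma hnbhd_comparable_region_measure_ge:
  fixes A :: "((real^'n::finite) \<times> real) set"
  assumes A: "A \<in> sets lebesgue" "A \<subseteq> upper_half" and d: "0 < \<delta>" and d': "0 < \<delta>'"
    and dens: "\<forall>z\<in>A. emeasure lebesgue (hball z \<delta> \<inter> A) \<ge> ennreal \<delta>' * emeasure lebesgue (hball z \<delta>)"
  obtains K :: nat and c :: real where "0 < c"
    and "\<And>p. p \<in> hnbhd A R \<Longrightarrow>
      ennreal (c * snd p ^ (CARD('n) + 1)) \<le> emeasure lebesgue (comparable_region p K \<inter> A)"
proof -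
  define N where "N = CARD('n) + 1"
  define a where "a = 2 * cosh R"
  define r where "r = min (1/2) (cosh \<delta> - 1)"
  define \<omega> where "\<omega> = unit_ball_vol N"
  have a: "2 \<le> a" using cosh_real_ge_1[of R] by (simp add: a_def)
  have r: "0 < r" using cosh_gt_1[OF d] by (simp add: r_def)
  have \<omega>: "0 < \<omega>" by (simp add: \<omega>_def)
  obtain K :: nat where K: "a * (1 + 2 * cosh \<delta>) \<le> real K" using real_arch_simple by blast
  define c where "c = \<delta>' * \<omega> * (r / a) ^ N"
  have c: "0 < c" using d' \<omega> r a by (simp add: c_def)
  have "ennreal (c * snd p ^ N) \<le> emeasure lebesgue (comparable_region p K \<inter> A)"
    if "p \<in> hnbhd A R" for p
  proof -
    obtain q where yp: "0 < snd p" and qA: "q \<in> A" and pq: "hrho p q < R"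
      using \<open>p \<in> hnbhd A R\<close> by (auto simp: hnbhd_def upper_half_def)
    have yq: "0 < snd q" using qA A(2) by (auto simp: upper_half_def)
    have "snd p < a * snd q"
      using hrho_less_imp_bounds(2)[OF yq yp] pq by (simp add: a_def hrho_commute)
    then have s: "0 \<le> snd p / a" "snd p / a \<le> snd q"
      using a yp by (simp_all add: divide_le_eq mult.commute)
    have "c * snd p ^ N = \<delta>' * (\<omega> * (r * (snd p / a)) ^ N)"
      by (simp add: c_def power_mult_distrib power_divide)
    then have "ennreal (c * snd p ^ N) = ennreal \<delta>' * ennreal (\<omega> * (r * (snd p / a)) ^ N)"
      using d' by (simp add: ennreal_mult')
    also have "\<dots> \<le> ennreal \<delta>' * emeasure lebesgue (hball q \<delta>)"
      using emeasure_hball_ge[OF d yq s] unfolding \<omega>_def r_def N_def by (rule mult_left_mono) simp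
    also have "\<dots> \<le> emeasure lebesgue (hball q \<delta> \<inter> A)"
      using dens qA by blast
    also have "\<dots> \<le> emeasure lebesgue (comparable_region p K \<inter> A)"
      using hball_subset_comparable_region[OF yp yq pq K[unfolded a_def]] A(1)
      by (intro emeasure_mono) auto
    finally show ?thesis .
  qed
  with c show thesis using that unfolding N_def by blast
qed

section \<open>Carleson boxes\<close>

definition carleson_box :: "nat \<Rightarrow> ('n::finite \<Rightarrow> int) \<Rightarrow> ((real^'n) \<times> real) set" where
  "carleson_box j k = dyadic_cube j k \<times> {0<..<1 / 2^j}"

definition dilated_box :: "nat \<Rightarrow> ('n::finite \<Rightarrow> int) \<Rightarrow> nat \<Rightarrow> ((real^'n) \<times> real) set" where
  "dilated_box j k K =
     {x. \<forall>i. (of_int (k i) - real K) / 2^j < x $ i \<and> x $ i < (of_int (k i) + real K + 1) / 2^j}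
     \<times> {0<..<(1 + real K) / 2^j}"

definition inv_height_integral :: "('a::euclidean_space \<times> real) set \<Rightarrow> ennreal" where
  "inv_height_integral S = (\<integral>\<^sup>+p. indicator S p / ennreal (snd p) \<partial>lebesgue)"

lemma inv_height_integral_box_le_Mcar:
  "ennreal (2 ^ (CARD('n) * j)) * inv_height_integral (A \<inter> carleson_box j (k :: 'n::finite \<Rightarrow> int))
    \<le> Mcar A"
  unfolding Mcar_def inv_height_integral_def carleson_box_def
  by (rule SUP_upper2[of "(j, k)"]) simp_all

lemma Mcar_le:
  assumes "\<And>j k. ennreal (2 ^ (CARD('n) * j)) * inv_height_integral (A \<inter> carleson_box j (k :: 'n::finite \<Rightarrow> int)) \<le> C"
  shows "Mcar A \<le> C"
  unfolding Mcar_def using assms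
  by (intro SUP_least) (auto simp: inv_height_integral_def carleson_box_def)

lemma borel_measurable_fst [measurable]:
  "(fst :: 'a::euclidean_space \<times> 'b::euclidean_space \<Rightarrow> 'a) \<in> borel_measurable borel"
  by (intro borel_measurable_continuous_onI continuous_intros)

lemma borel_measurable_snd [measurable]:
  "(snd :: 'a::euclidean_space \<times> 'b::euclidean_space \<Rightarrow> 'b) \<in> borel_measurable borel"
  by (intro borel_measurable_continuous_onI continuous_intros)

lemma lebesgue_measurable_snd [measurable]:
  "(snd :: 'a::euclidean_space \<times> 'b::euclidean_space \<Rightarrow> 'b) \<in> borel_measurable lebesgue"
  by (rule measurable_completion) simp

lemma borel_measurable_inv_height:
  assumes "S \<in> sets lebesgue"
  shows "(\<lambda>p::'a::euclidean_space \<times> real. indicator S p / ennreal (snd p)) \<in> borel_measurable lebesgue"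
  using assms by measurable

lemma sets_borel_carleson_box [measurable]: "carleson_box j k \<in> sets borel"
  unfolding carleson_box_def dyadic_cube_def borel_prod[symmetric]
  by (intro pair_measureI) measurable

lemma sets_borel_dilated_box [measurable]: "dilated_box j k K \<in> sets borel"
  unfolding dilated_box_def borel_prod[symmetric]
  by (intro pair_measureI) measurable

lemma comparable_region_subset_dilated_box:
  assumes "p \<in> carleson_box j k"
  shows "comparable_region p (real K) \<subseteq> dilated_box j k K"
proof
  fix w assume w: "w \<in> comparable_region p (real K)"
  from assms have yp: "0 < snd p" and yp1: "snd p < 1 / 2^j"
    and xp: "\<And>i. of_int (k i) / 2^j \<le> fst p $ i \<and> fst p $ i < (of_int (k i) + 1) / 2^j"
    by (auto simp: carleson_box_def dyadic_cube_def)
  from w have d: "dist p w < real K * snd p" and y: "snd p < real K * snd w"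
    by (auto simp: comparable_region_def)
  have "0 < real K * snd w" using yp y by linarith
  then have yw: "0 < snd w" by (simp add: zero_less_mult_iff)
  have "snd w < (1 + real K) * snd p" using comparable_regionD(2)[OF w yp] .
  also have "\<dots> \<le> (1 + real K) * (1 / 2^j)" using yp1 by (intro mult_left_mono) auto
  finally have yw1: "snd w < (1 + real K) / 2^j" by simp
  have dK: "dist p w < real K / 2^j"
  proof -
    have "real K * snd p \<le> real K * (1 / 2^j)" using yp1 by (intro mult_left_mono) auto
    then show ?thesis using d by simp
  qed
  have "(of_int (k i) - real K) / 2^j < fst w $ i \<and> fst w $ i < (of_int (k i) + real K + 1) / 2^j" for i
  proof -
    have "\<bar>fst w $ i - fst p $ i\<bar> \<le> dist (fst w) (fst p)"
      using component_le_norm_cart[of "fst w - fst p" i] by (simp add: dist_norm)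
    also have "\<dots> \<le> dist w p" by (rule dist_fst_le)
    finally have "\<bar>fst w $ i - fst p $ i\<bar> < real K / 2^j" using dK by (simp add: dist_commute)
    then show ?thesis using xp[of i] by (simp add: diff_divide_distrib add_divide_distrib abs_less_iff)
  qed
  then show "w \<in> dilated_box j k K"
    using yw yw1 by (cases w) (simp add: dilated_box_def)
qed

lemma dilated_box_below_in_carleson_box:
  assumes w: "w \<in> dilated_box j k K" and yw: "snd w < 1 / 2^j"
  obtains k' where "k' \<in> (\<Pi>\<^sub>E i\<in>UNIV. {k i - int K .. k i + int K})" and "w \<in> carleson_box j k'"
proof
  define k' where "k' i = \<lfloor>fst w $ i * 2^j\<rfloor>" for i
  from w have yw0: "0 < snd w"
    and xw: "\<And>i. (of_int (k i) - real K) / 2^j < fst w $ i \<and> fst w $ i < (of_int (k i) + real K + 1) / 2^j"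
    by (auto simp: dilated_box_def mem_Times_iff)
  have "k i - int K \<le> k' i \<and> k' i \<le> k i + int K" for i
  proof -
    have "of_int (k i) - real K < fst w $ i * 2^j" "fst w $ i * 2^j < of_int (k i) + real K + 1"
      using xw[of i] by (simp_all add: divide_less_eq less_divide_eq)
    then show ?thesis unfolding k'_def by (simp add: le_floor_iff floor_le_iff)
  qed
  then show "k' \<in> (\<Pi>\<^sub>E i\<in>UNIV. {k i - int K .. k i + int K})" by (simp add: PiE_iff)
  have "of_int (k' i) / 2^j \<le> fst w $ i \<and> fst w $ i < (of_int (k' i) + 1) / 2^j" for i
    unfolding k'_def
    using of_int_floor_le[of "fst w $ i * 2^j"] real_of_int_floor_add_one_gt[of "fst w $ i * 2^j"]
    by (simp add: divide_le_eq less_divide_eq)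
  then show "w \<in> carleson_box j k'"
    using yw0 yw by (auto simp: carleson_box_def dyadic_cube_def mem_Times_iff)
qed

lemma dilated_box_subset_ball:
  fixes k :: "'n::finite \<Rightarrow> int"
  shows "dilated_box j k K \<subseteq> ball ((\<chi> i. of_int (k i) / 2^j), 0) (real ((CARD('n) + 1) * (K + 1)) / 2^j)"
proof
  fix w :: "(real^'n) \<times> real"
  define ctr where "ctr = ((\<chi> i. of_int (k i) / 2^j) :: real^'n, 0::real)"
  assume "w \<in> dilated_box j k K"
  then have yw: "0 < snd w" "snd w < (1 + real K) / 2^j"
    and xw: "\<And>i. (of_int (k i) - real K) / 2^j < fst w $ i \<and> fst w $ i < (of_int (k i) + real K + 1) / 2^j"
    by (auto simp: dilated_box_def mem_Times_iff)
  have coord: "\<bar>fst w $ i - fst ctr $ i\<bar> < (real K + 1) / 2^j" for i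
    using xw[of i] by (simp add: ctr_def abs_less_iff field_simps)
  have "norm (fst w - fst ctr) \<le> (\<Sum>i\<in>UNIV. \<bar>(fst w - fst ctr) $ i\<bar>)"
    by (rule norm_le_l1_cart)
  also have "\<dots> < (\<Sum>i\<in>(UNIV::'n set). (real K + 1) / 2^j)"
    by (rule sum_strict_mono) (simp_all add: coord)
  also have "\<dots> = real CARD('n) * (real K + 1) / 2^j" by simp
  finally have "dist w ctr < real CARD('n) * (real K + 1) / 2^j + (1 + real K) / 2^j"
    using norm_Pair_le[of "fst w - fst ctr" "snd w - snd ctr"] yw
    by (cases w) (simp add: dist_norm ctr_def)
  also have "\<dots> = real ((CARD('n) + 1) * (K + 1)) / 2^j"
    by (simp add: add_divide_distrib[symmetric] algebra_simps)
  finally show "w \<in> ball ((\<chi> i. of_int (k i) / 2^j), 0) (real ((CARD('n) + 1) * (K + 1)) / 2^j)"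
    by (simp add: ctr_def dist_commute)
qed

section \<open>The Fubini estimate\<close>

lemma ennreal_one_divide: "0 < y \<Longrightarrow> ennreal (1 / y) = 1 / ennreal y"
  using divide_ennreal[of 1 y] by simp

text \<open>
  Integrated in w over a set of the required density, the kernel dominates 1/y_p on the box;
  integrated in p, it is at most C/y_w on the dilated box and vanishes off it. Exchanging the
  two integrations gives the box estimate.
\<close>

definition box_kernel ::
    "real \<Rightarrow> nat \<Rightarrow> nat \<Rightarrow> ('n::finite \<Rightarrow> int) \<Rightarrow> (real^'n) \<times> real \<Rightarrow> (real^'n) \<times> real \<Rightarrow> ennreal"
  where "box_kernel c K j k p w = indicator (carleson_box j k) p * ennreal (1 / (c * snd p ^ (CARD('n) + 2)))
    * indicator (comparable_region p K) w"

lemma box_kernel_le: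
  fixes w :: "(real^'n::finite) \<times> real"
  assumes c: "0 < c" and yw: "0 < snd w"
  shows "box_kernel c K j k p w
    \<le> ennreal ((1 + real K) ^ (CARD('n) + 2) / (c * snd w ^ (CARD('n) + 2)))
      * indicator (ball w ((real K)\<^sup>2 * snd w)) p"
proof (cases "p \<in> carleson_box j k \<and> w \<in> comparable_region p K")
  case True
  define M where "M = CARD('n) + 2"
  have yp: "0 < snd p" using True by (auto simp: carleson_box_def)
  note pw = comparable_regionD[OF True[THEN conjunct2] yp]
  have "snd w ^ M \<le> ((1 + real K) * snd p) ^ M"
    using pw(2) yw by (intro power_mono) auto
  have "1 / (c * snd p ^ M) = (1 + real K) ^ M / ((1 + real K) ^ M * (c * snd p ^ M))"
    by (rule nonzero_divide_mult_cancel_left[symmetric]) (rule power_not_zero, simp)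
  also have "\<dots> = (1 + real K) ^ M / (c * ((1 + real K) * snd p) ^ M)"
    by (simp add: power_mult_distrib mult_ac)
  also have "\<dots> \<le> (1 + real K) ^ M / (c * snd w ^ M)"
    using \<open>snd w ^ M \<le> _\<close> c yp yw by (intro divide_left_mono mult_left_mono) auto
  finally show ?thesis
    using True pw(1) by (simp add: box_kernel_def M_def ennreal_leI)
qed (auto simp: box_kernel_def indicator_def)

lemma nn_integral_box_kernel_le:
  fixes w :: "(real^'n::finite) \<times> real" and K :: nat
  assumes c: "0 < c"
  defines "N \<equiv> CARD('n) + 1"
  shows "(\<integral>\<^sup>+p. box_kernel c K j k p w \<partial>lborel)
    \<le> ennreal ((1 + real K) ^ (N + 1) * real K ^ (2 * N) * unit_ball_vol N / c)
        * (indicator (dilated_box j k K) w / ennreal (snd w))"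
proof (cases "w \<in> dilated_box j k K")
  case False
  then have "box_kernel c K j k p w = 0" for p
    using comparable_region_subset_dilated_box[of p j k K] by (auto simp: box_kernel_def indicator_def)
  then show ?thesis by simp
next
  case True
  then have yw: "0 < snd w" by (auto simp: dilated_box_def)
  define D where "D = (1 + real K) ^ (N + 1) / (c * snd w ^ (N + 1))"
  have D: "0 \<le> D" using c yw by (simp add: D_def)
  have "(\<integral>\<^sup>+p. box_kernel c K j k p w \<partial>lborel)
      \<le> (\<integral>\<^sup>+p. ennreal D * indicator (ball w (K\<^sup>2 * snd w)) p \<partial>lborel)"
    using box_kernel_le[OF c yw] by (intro nn_integral_mono) (simp add: D_def N_def)
  also have "\<dots> = ennreal D * emeasure lborel (ball w (K\<^sup>2 * snd w))"
    by (simp add: nn_integral_cmult_indicator)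
  also have "\<dots> = ennreal (D * (unit_ball_vol N * (K\<^sup>2 * snd w) ^ N))"
    using yw D by (simp add: emeasure_ball N_def ennreal_mult)
  also have "D * (unit_ball_vol N * (K\<^sup>2 * snd w) ^ N)
      = (1 + real K) ^ (N + 1) * real K ^ (2 * N) * unit_ball_vol N / c * (1 / snd w)"
  proof -
    have "((real K)\<^sup>2 * snd w) ^ N = real K ^ (2 * N) * snd w ^ N"
      by (simp add: power_mult_distrib power_mult)
    then show ?thesis using c yw by (simp add: D_def field_simps)
  qed
  also have "ennreal \<dots> = ennreal ((1 + real K) ^ (N + 1) * real K ^ (2 * N) * unit_ball_vol N / c)
      * ennreal (1 / snd w)"
    using yw by (intro ennreal_mult'') simp
  also have "ennreal (1 / snd w) = indicator (dilated_box j k K) w / ennreal (snd w)"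
    using True yw by (simp add: ennreal_one_divide)
  finally show ?thesis .
qed

lemma inv_height_le_nn_integral_box_kernel:
  fixes B X :: "((real^'n::finite) \<times> real) set" and K :: nat
  assumes B: "B \<in> sets borel" and c: "0 < c"
    and low: "p \<in> X \<Longrightarrow>
      ennreal (c * snd p ^ (CARD('n) + 1)) \<le> emeasure lborel (comparable_region p K \<inter> B)"
  shows "indicator (X \<inter> carleson_box j k) p / ennreal (snd p)
    \<le> (\<integral>\<^sup>+w. box_kernel c K j k p w * indicator B w \<partial>lborel)"
proof (cases "p \<in> X \<inter> carleson_box j k")
  case True
  define N where "N = CARD('n) + 1"
  have yp: "0 < snd p" using True by (auto simp: carleson_box_def)
  have "indicator (X \<inter> carleson_box j k) p / ennreal (snd p) = ennreal (1 / snd p)"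
    using True yp by (simp add: ennreal_one_divide)
  also have "1 / snd p = 1 / (c * snd p ^ (N + 1)) * (c * snd p ^ N)"
    using c yp by (simp add: field_simps)
  also have "ennreal \<dots> = ennreal (1 / (c * snd p ^ (N + 1))) * ennreal (c * snd p ^ N)"
    using c yp by (intro ennreal_mult) auto
  also have "\<dots> \<le> ennreal (1 / (c * snd p ^ (N + 1))) * emeasure lborel (comparable_region p K \<inter> B)"
    using low True by (intro mult_left_mono) (auto simp: N_def)
  also have "\<dots> = (\<integral>\<^sup>+w. ennreal (1 / (c * snd p ^ (N + 1)))
      * indicator (comparable_region p K \<inter> B) w \<partial>lborel)"
    using B by (simp add: nn_integral_cmult_indicator borel_open open_comparable_region)
  also have "\<dots> = (\<integral>\<^sup>+w. box_kernel c K j k p w * indicator B w \<partial>lborel)"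
    using True by (intro nn_integral_cong) (simp add: box_kernel_def N_def indicator_inter_arith mult_ac)
  finally show ?thesis .
qed simp

lemma inv_height_integral_box_le_borel:
  fixes B X :: "((real^'n::finite) \<times> real) set" and K :: nat
  assumes B: "B \<in> sets borel" and c: "0 < c"
    and low: "\<And>p. p \<in> X \<Longrightarrow>
      ennreal (c * snd p ^ (CARD('n) + 1)) \<le> emeasure lborel (comparable_region p K \<inter> B)"
  obtains C :: real where "\<And>j k. inv_height_integral (X \<inter> carleson_box j k)
    \<le> ennreal C * inv_height_integral (B \<inter> dilated_box j k K)"
proof
  define N where "N = CARD('n) + 1"
  define C where "C = (1 + real K) ^ (N + 1) * real K ^ (2 * N) * unit_ball_vol N / c"
  fix j k
  let ?g = "\<lambda>w. indicator (B \<inter> dilated_box j k K) w / ennreal (snd w)"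
  have inner: "(\<integral>\<^sup>+p. box_kernel c K j k p w * indicator B w \<partial>lborel) \<le> ennreal C * ?g w" for w
  proof -
    have "(\<integral>\<^sup>+p. box_kernel c K j k p w * indicator B w \<partial>lborel)
        = (\<integral>\<^sup>+p. box_kernel c K j k p w \<partial>lborel) * indicator B w"
      unfolding box_kernel_def comparable_region_def by (rule nn_integral_multc) measurable
    also have "\<dots> \<le> ennreal C * (indicator (dilated_box j k K) w / ennreal (snd w)) * indicator B w"
      using nn_integral_box_kernel_le[OF c, of K j k w] by (intro mult_right_mono) (simp_all add: C_def N_def)
    also have "\<dots> = ennreal C * ?g w"
      by (simp add: indicator_inter_arith ennreal_times_divide mult_ac)
    finally show ?thesis .
  qed
  have g: "?g \<in> borel_measurable lborel"
    unfolding measurable_lborel2 using B by measurable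
  have kernel: "(\<lambda>(p, w). box_kernel c K j k p w * indicator B w) \<in> borel_measurable (lborel \<Otimes>\<^sub>M lborel)"
    unfolding box_kernel_def comparable_region_def lborel_prod using B by measurable
  have "inv_height_integral (X \<inter> carleson_box j k)
      \<le> (\<integral>\<^sup>+p. (\<integral>\<^sup>+w. box_kernel c K j k p w * indicator B w \<partial>lborel) \<partial>lborel)"
    unfolding inv_height_integral_def nn_integral_completion
    by (intro nn_integral_mono inv_height_le_nn_integral_box_kernel[OF B c low])
  also have "\<dots> = (\<integral>\<^sup>+w. (\<integral>\<^sup>+p. box_kernel c K j k p w * indicator B w \<partial>lborel) \<partial>lborel)"
    using kernel by (rule lborel_pair.Fubini'[symmetric])
  also have "\<dots> \<le> (\<integral>\<^sup>+w. ennreal C * ?g w \<partial>lborel)"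
    by (intro nn_integral_mono inner)
  also have "\<dots> = ennreal C * inv_height_integral (B \<inter> dilated_box j k K)"
    unfolding inv_height_integral_def nn_integral_completion using g by (rule nn_integral_cmult)
  finally show "inv_height_integral (X \<inter> carleson_box j k)
    \<le> ennreal C * inv_height_integral (B \<inter> dilated_box j k K)" .
qed

lemma inv_height_integral_box_le:
  fixes A X :: "((real^'n::finite) \<times> real) set" and K :: nat
  assumes A: "A \<in> sets lebesgue" and c: "0 < c"
    and low: "\<And>p. p \<in> X \<Longrightarrow>
      ennreal (c * snd p ^ (CARD('n) + 1)) \<le> emeasure lebesgue (comparable_region p K \<inter> A)"
  obtains C :: real where "\<And>j k. inv_height_integral (X \<inter> carleson_box j k)
    \<le> ennreal C * inv_height_integral (A \<inter> dilated_box j k K)"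
proof -
  \<comment> \<open>Fubini needs a Borel set: replace A by a Borel hull B with B - A null.\<close>
  obtain S N0 N' where S: "S \<in> sets lborel" and N': "N' \<in> null_sets lborel"
    and A_eq: "A = S \<union> N0" and "N0 \<subseteq> N'"
    using sets_completionE[OF A] by metis
  define B where "B = S \<union> N'"
  have B: "B \<in> sets borel" using S N' by (auto simp: B_def null_sets_def)
  have A_B: "A \<subseteq> B" "B - A \<subseteq> N'" using A_eq \<open>N0 \<subseteq> N'\<close> by (auto simp: B_def)
  have "emeasure lebesgue (comparable_region p K \<inter> A) \<le> emeasure lborel (comparable_region p K \<inter> B)" for p
  proof -
    have "emeasure lebesgue (comparable_region p K \<inter> A) \<le> emeasure lebesgue (comparable_region p K \<inter> B)"
      using A_B B by (intro emeasure_mono) auto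
    then show ?thesis using B borel_open[OF open_comparable_region[of p K]] by simp
  qed
  with low have low_B: "ennreal (c * snd p ^ (CARD('n) + 1)) \<le> emeasure lborel (comparable_region p K \<inter> B)"
    if "p \<in> X" for p
    using that order_trans by blast
  obtain C where C: "\<And>j k. inv_height_integral (X \<inter> carleson_box j k)
      \<le> ennreal C * inv_height_integral (B \<inter> dilated_box j k K)"
    using inv_height_integral_box_le_borel[OF B c low_B] by blast
  have "AE w in lebesgue. w \<notin> N'"
    using N' by (intro AE_not_in null_sets_completionI)
  then have "inv_height_integral (B \<inter> dilated_box j k K) = inv_height_integral (A \<inter> dilated_box j k K)"
    for j k unfolding inv_height_integral_def
    by (intro nn_integral_cong_AE) (use A_B in \<open>auto elim!: eventually_mono simp: indicator_def\<close>)
  with C show thesis using that by metis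
qed

section \<open>Covering a dilated box\<close>

lemma indicator_dilated_box_le:
  fixes k :: "'n::finite \<Rightarrow> int"
  shows "indicator (A \<inter> dilated_box j k K) w / ennreal (snd w)
    \<le> (\<Sum>k'\<in>(\<Pi>\<^sub>E i\<in>UNIV. {k i - int K .. k i + int K}). indicator (A \<inter> carleson_box j k') w / ennreal (snd w))
      + ennreal (2^j) * indicator (ball ((\<chi> i. of_int (k i) / 2^j), 0) (real ((CARD('n) + 1) * (K + 1)) / 2^j)) w"
    (is "_ \<le> (\<Sum>k'\<in>?Ks. ?f k') + ennreal (2^j) * indicator ?ball w")
proof (cases "w \<in> A \<inter> dilated_box j k K")
  case True
  then have wA: "w \<in> A" and wD: "w \<in> dilated_box j k K" by auto
  then have yw: "0 < snd w" by (auto simp: dilated_box_def)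
  have lhs: "indicator (A \<inter> dilated_box j k K) w / ennreal (snd w) = ennreal (1 / snd w)"
    using True yw by (simp add: ennreal_one_divide)
  show ?thesis
  proof (cases "snd w < 1 / 2^j")
    case True
    then obtain k' where k': "k' \<in> ?Ks" and "w \<in> carleson_box j k'"
      using dilated_box_below_in_carleson_box[OF wD] by blast
    then have "ennreal (1 / snd w) = ?f k'"
      using wA yw by (simp add: ennreal_one_divide)
    also have "\<dots> \<le> (\<Sum>k'\<in>?Ks. ?f k')"
      using k' by (intro member_le_sum) (auto intro: finite_PiE)
    finally show ?thesis using lhs by (simp add: add_increasing2)
  next
    case False
    then have "1 / snd w \<le> 2^j" using yw by (simp add: field_simps)
    then have "ennreal (1 / snd w) \<le> ennreal (2^j) * indicator ?ball w"
      using dilated_box_subset_ball[of j k K] wD by (auto intro: ennreal_leI)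
    then show ?thesis using lhs by (simp add: add_increasing)
  qed
qed simp

lemma inv_height_integral_dilated_box_le_sum:
  fixes A :: "((real^'n::finite) \<times> real) set" and k :: "'n \<Rightarrow> int"
  assumes A: "A \<in> sets lebesgue"
  shows "inv_height_integral (A \<inter> dilated_box j k K)
    \<le> (\<Sum>k'\<in>(\<Pi>\<^sub>E i\<in>UNIV. {k i - int K .. k i + int K}). inv_height_integral (A \<inter> carleson_box j k'))
      + ennreal (2^j) * emeasure lborel
          (ball ((\<chi> i. of_int (k i) / 2^j) :: real^'n, 0 :: real) (real ((CARD('n) + 1) * (K + 1)) / 2^j))"
    (is "_ \<le> (\<Sum>k'\<in>?Ks. _) + ennreal (2^j) * emeasure lborel ?ball")
proof -
  let ?f = "\<lambda>k' w. indicator (A \<inter> carleson_box j k') w / ennreal (snd w)"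
  have f: "?f k' \<in> borel_measurable lebesgue" for k'
    using A by (intro borel_measurable_inv_height sets.Int) simp_all
  have ball: "(\<lambda>w. ennreal (2^j) * indicator ?ball w) \<in> borel_measurable lebesgue"
    by (intro borel_measurable_times_ennreal borel_measurable_const borel_measurable_indicator)
      (simp add: borel_open)
  have "inv_height_integral (A \<inter> dilated_box j k K)
      \<le> (\<integral>\<^sup>+w. (\<Sum>k'\<in>?Ks. ?f k' w) + ennreal (2^j) * indicator ?ball w \<partial>lebesgue)"
    unfolding inv_height_integral_def by (intro nn_integral_mono indicator_dilated_box_le)
  also have "\<dots> = (\<integral>\<^sup>+w. (\<Sum>k'\<in>?Ks. ?f k' w) \<partial>lebesgue) + (\<integral>\<^sup>+w. ennreal (2^j) * indicator ?ball w \<partial>lebesgue)"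
    using f ball by (intro nn_integral_add) auto
  also have "(\<integral>\<^sup>+w. (\<Sum>k'\<in>?Ks. ?f k' w) \<partial>lebesgue) = (\<Sum>k'\<in>?Ks. inv_height_integral (A \<inter> carleson_box j k'))"
    unfolding inv_height_integral_def using f by (intro nn_integral_sum) auto
  also have "(\<integral>\<^sup>+w. ennreal (2^j) * indicator ?ball w \<partial>lebesgue) = ennreal (2^j) * emeasure lborel ?ball"
    by (simp add: nn_integral_cmult_indicator borel_open)
  finally show ?thesis .
qed

lemma inv_height_integral_dilated_box_le:
  fixes A :: "((real^'n::finite) \<times> real) set" and k :: "'n \<Rightarrow> int"
  assumes A: "A \<in> sets lebesgue"
  shows "ennreal (2 ^ (CARD('n) * j)) * inv_height_integral (A \<inter> dilated_box j k K)
    \<le> of_nat ((2 * K + 1) ^ CARD('n)) * Mcar A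
      + ennreal (unit_ball_vol (CARD('n) + 1) * real ((CARD('n) + 1) * (K + 1)) ^ (CARD('n) + 1))"
proof -
  define n where "n = CARD('n)"
  define Ks where "Ks = (\<Pi>\<^sub>E i\<in>UNIV. {k i - int K .. k i + int K})"
  define ctr where "ctr = ((\<chi> i. of_int (k i) / 2^j) :: real^'n, 0 :: real)"
  define m where "m = real ((n + 1) * (K + 1))"
  have card_Ks: "card Ks = (2 * K + 1) ^ n"
    by (simp add: Ks_def n_def card_PiE nat_add_distrib nat_mult_distrib)
  have "ennreal (2 ^ (n * j)) * inv_height_integral (A \<inter> dilated_box j k K)
      \<le> ennreal (2 ^ (n * j)) * ((\<Sum>k'\<in>Ks. inv_height_integral (A \<inter> carleson_box j k'))
        + ennreal (2^j) * emeasure lborel (ball ctr (m / 2^j)))"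
    using inv_height_integral_dilated_box_le_sum[OF A, of j k K]
    unfolding Ks_def ctr_def m_def n_def by (rule mult_left_mono) simp
  also have "\<dots> = (\<Sum>k'\<in>Ks. ennreal (2 ^ (n * j)) * inv_height_integral (A \<inter> carleson_box j k'))
        + ennreal (2 ^ (n * j)) * (ennreal (2^j) * emeasure lborel (ball ctr (m / 2^j)))"
    by (simp add: distrib_left sum_distrib_left)
  also have "(\<Sum>k'\<in>Ks. ennreal (2 ^ (n * j)) * inv_height_integral (A \<inter> carleson_box j k'))
      \<le> (\<Sum>k'\<in>Ks. Mcar A)"
    unfolding n_def by (intro sum_mono inv_height_integral_box_le_Mcar)
  also have "\<dots> = of_nat ((2 * K + 1) ^ n) * Mcar A"
    by (simp add: card_Ks)
  also have "ennreal (2 ^ (n * j)) * (ennreal (2^j) * emeasure lborel (ball ctr (m / 2^j)))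
      = ennreal (unit_ball_vol (n + 1) * m ^ (n + 1))"
  proof -
    have "(2::real) ^ (n * j) * 2^j * (m / 2^j) ^ (n + 1) = m ^ (n + 1)"
      by (simp add: power_divide power_add power_mult[symmetric] mult.commute)
    then show ?thesis
      by (simp add: emeasure_ball n_def m_def ennreal_mult[symmetric] mult_ac)
  qed
  finally show ?thesis by (simp add: n_def m_def)
qed

theorem mainTheorem17:
  fixes A :: "((real^'n::finite) \<times> real) set" and \<delta> \<delta>' :: real
  assumes "A \<in> sets lebesgue"
    and "A \<subseteq> upper_half"
    and "Mcar A < \<infinity>"
    and "0 < \<delta>" "\<delta> < 1/10" "0 < \<delta>'" "\<delta>' < 1/10"
    and "\<forall>z\<in>A. emeasure lebesgue (hball z \<delta> \<inter> A) \<ge> ennreal \<delta>' * emeasure lebesgue (hball z \<delta>)"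
  shows "\<forall>R. 0 < R \<longrightarrow> Mcar (hnbhd A R) < \<infinity>"
proof (intro allI impI)
  fix R :: real
  obtain K c where c: "0 < c" and low: "\<And>p. p \<in> hnbhd A R \<Longrightarrow>
      ennreal (c * snd p ^ (CARD('n) + 1)) \<le> emeasure lebesgue (comparable_region p (real K) \<inter> A)"
    using hnbhd_comparable_region_measure_ge[OF assms(1,2,4,6,8)] by metis
  obtain C where box: "\<And>j k. inv_height_integral (hnbhd A R \<inter> carleson_box j k)
      \<le> ennreal C * inv_height_integral (A \<inter> dilated_box j k K)"
    using inv_height_integral_box_le[OF assms(1) c low] by blast
  define bound where "bound = of_nat ((2 * K + 1) ^ CARD('n)) * Mcar A
    + ennreal (unit_ball_vol (CARD('n) + 1) * real ((CARD('n) + 1) * (K + 1)) ^ (CARD('n) + 1))"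
  have "Mcar (hnbhd A R) \<le> ennreal C * bound"
  proof (rule Mcar_le)
    fix j k
    have "ennreal (2 ^ (CARD('n) * j)) * inv_height_integral (hnbhd A R \<inter> carleson_box j k)
        \<le> ennreal C * (ennreal (2 ^ (CARD('n) * j)) * inv_height_integral (A \<inter> dilated_box j k K))"
      using mult_left_mono[OF box[of j k], of "ennreal (2 ^ (CARD('n) * j))"] by (simp add: mult_ac)
    also have "\<dots> \<le> ennreal C * bound"
      unfolding bound_def by (intro mult_left_mono inv_height_integral_dilated_box_le assms(1)) simp
    finally show "ennreal (2 ^ (CARD('n) * j)) * inv_height_integral (hnbhd A R \<inter> carleson_box j k)
        \<le> ennreal C * bound" .
  qed
  also have "\<dots> < \<infinity>"
    using assms(3) by (simp add: bound_def ennreal_mult_less_top power_less_top_ennreal of_nat_less_top)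
  finally show "Mcar (hnbhd A R) < \<infinity>" .
qed

end
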